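(* Let $X$ be a real random variable with finite mean $\mathrm{E}X=0$, and let $\{X_j\}_{j\ge1}$ be independent random variables, each distributed as $X$. Let $R_0>0$. For each $i\in\mathbb{N}$, let $a_i\in[-R_0,R_0]$ and $\lambda_i\in\{-1,1\}$ be random variables depending only on $X_1,\dots,X_{i-1}$. For all $t$ define $$Y_t=\frac{1}{t}\sum_{j=1}^t\lambda_jX_j,\qquad Z_t=\frac{1}{t^2}\sum_{i=1}^t a_i\Big(\sum_{j=i}^t\lambda_jX_j\Big)=\frac{1}{t^2}\sum_{j=1}^t\lambda_j\Big(\sum_{i=1}^j a_i\Big)X_j.$$ Then for every $\epsilon>0$, $$\lim_{t\to\infty}\Pr(|Y_t|>\epsilon)=\lim_{t\to\infty}\Pr(|Z_t|>\epsilon)=0.$$ *)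

theory Defs
  imports "HOL-Probability.Probability"
begin

definition past_sigma :: "'a measure \<Rightarrow> (nat \<Rightarrow> 'a \<Rightarrow> real) \<Rightarrow> nat \<Rightarrow> 'a measure" where
  "past_sigma M Xs i =
     sigma (space M) (\<Union>j\<in>{1..<i}. {Xs j -` A \<inter> space M | A. A \<in> sets borel})"

end

theory Submission
  imports Defs
begin

text \<open>Truncate \<open>X\<close> at a level \<open>K\<close>. An increment \<open>c_j X_j\<close> whose weight \<open>c_j\<close> is bounded and
  determined by \<open>X_1, ..., X_(j-1)\<close> splits into \<open>c_j (cutoff K X_j - E (cutoff K X))\<close>, a bounded
  martingale difference, and \<open>c_j\<close> times a remainder of mean absolute value at most
  \<open>2 E|X - cutoff K X|\<close>. The martingale part of \<open>c_1 X_1 + ... + c_t X_t\<close> has second moment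
  \<open>O(t K\<^sup>2)\<close>, so after division by \<open>t\<close> Chebyshev makes it small; the remainder part is small by
  Markov once \<open>K\<close> is large, because \<open>E|X - cutoff K X| \<rightarrow> 0\<close> by dominated convergence. \<open>Y_t\<close> is
  such an average with \<open>c_j = \<lambda>_j\<close>, and after exchanging the order of summation so is \<open>Z_t\<close>, with
  \<open>c_j = \<lambda>_j (a_1 + ... + a_j) / t\<close>, bounded by \<open>R\<^sub>0\<close>.\<close>

lemma sum_times_tail_sum_swap:
  fixes f g :: "nat \<Rightarrow> 'b::comm_semiring_1"
  shows "(\<Sum>i=1..t. f i * (\<Sum>j=i..t. g j)) = (\<Sum>j=1..t. g j * (\<Sum>i=1..j. f i))"
proof (induction t)
  case (Suc t)
  have "(\<Sum>i=1..t. f i * (\<Sum>j=i..Suc t. g j))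
      = (\<Sum>i=1..t. f i * (\<Sum>j=i..t. g j)) + (\<Sum>i=1..t. f i) * g (Suc t)"
    by (simp add: sum_distrib_right distrib_left sum.distrib)
  then show ?case
    using Suc by (simp add: algebra_simps)
qed simp

lemma abs_sum_le_mult_bound:
  fixes f :: "nat \<Rightarrow> real"
  assumes "\<And>j. 1 \<le> j \<Longrightarrow> j \<le> n \<Longrightarrow> \<bar>f j\<bar> \<le> B"
  shows "\<bar>\<Sum>j=1..n. f j\<bar> \<le> real n * B"
proof -
  have "\<bar>\<Sum>j=1..n. f j\<bar> \<le> (\<Sum>j=1..n. \<bar>f j\<bar>)"
    by (rule sum_abs)
  also have "\<dots> \<le> of_nat (card {1..n}) * B"
    by (rule sum_bounded_above) (use assms in auto)
  finally show ?thesis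
    by simp
qed

lemma (in prob_space) integrable_bounded:
  fixes f :: "'a \<Rightarrow> real"
  assumes "f \<in> borel_measurable M" and "\<And>\<omega>. \<omega> \<in> space M \<Longrightarrow> \<bar>f \<omega>\<bar> \<le> B"
  shows "integrable M f"
  by (rule integrable_const_bound[where B = B]) (use assms in auto)

lemma (in prob_space) prob_abs_add_gt_le:
  fixes U V :: "'a \<Rightarrow> real"
  assumes "c > 0"
    and [measurable]: "U \<in> borel_measurable M" "V \<in> borel_measurable M"
    and "integrable M (\<lambda>\<omega>. (U \<omega>)\<^sup>2)" and "integrable M V"
  shows "prob {\<omega> \<in> space M. \<bar>U \<omega> + V \<omega>\<bar> > 2 * c}
           \<le> expectation (\<lambda>\<omega>. (U \<omega>)\<^sup>2) / c\<^sup>2 + expectation (\<lambda>\<omega>. \<bar>V \<omega>\<bar>) / c"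
proof -
  let ?U = "{\<omega> \<in> space M. (U \<omega>)\<^sup>2 \<ge> c\<^sup>2}" and ?V = "{\<omega> \<in> space M. \<bar>V \<omega>\<bar> \<ge> c}"
  have "{\<omega> \<in> space M. \<bar>U \<omega> + V \<omega>\<bar> > 2 * c} \<subseteq> ?U \<union> ?V"
  proof safe
    fix \<omega> assume "\<omega> \<in> space M" "\<bar>U \<omega> + V \<omega>\<bar> > 2 * c" "\<not> \<bar>V \<omega>\<bar> \<ge> c"
    then have "c \<le> \<bar>U \<omega>\<bar>"
      by linarith
    then show "(U \<omega>)\<^sup>2 \<ge> c\<^sup>2"
      using \<open>c > 0\<close> by (metis abs_le_square_iff abs_of_pos)
  qed
  then have "prob {\<omega> \<in> space M. \<bar>U \<omega> + V \<omega>\<bar> > 2 * c} \<le> prob (?U \<union> ?V)"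
    by (intro finite_measure_mono) measurable
  also have "\<dots> \<le> prob ?U + prob ?V"
    by (rule measure_Un_le) measurable
  also have "prob ?U \<le> expectation (\<lambda>\<omega>. (U \<omega>)\<^sup>2) / c\<^sup>2"
    by (rule integral_Markov_inequality_measure[where A = "space M"]) (use assms in auto)
  also have "prob ?V \<le> expectation (\<lambda>\<omega>. \<bar>V \<omega>\<bar>) / c"
    by (rule integral_Markov_inequality_measure[where A = "space M"]) (use assms in auto)
  finally show ?thesis
    by simp
qed

locale iid_sequence = prob_space M for M :: "'a measure" +
  fixes X :: "'a \<Rightarrow> real" and Xs :: "nat \<Rightarrow> 'a \<Rightarrow> real"
  assumes integrable_X: "integrable M X"
    and indep_Xs: "indep_vars (\<lambda>_. borel) Xs {1..}"
    and distr_Xs: "\<And>j. j \<ge> 1 \<Longrightarrow> distr M borel (Xs j) = distr M borel X"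
begin

lemma Xs_measurable [measurable]: "j \<ge> 1 \<Longrightarrow> Xs j \<in> borel_measurable M"
  using indep_Xs unfolding indep_vars_def by auto

lemma X_measurable [measurable]: "X \<in> borel_measurable M"
  using integrable_X by auto

lemma integrable_Xs_comp_iff:
  fixes g :: "real \<Rightarrow> real"
  assumes "j \<ge> 1" and [measurable]: "g \<in> borel_measurable borel"
  shows "integrable M (\<lambda>\<omega>. g (Xs j \<omega>)) \<longleftrightarrow> integrable M (\<lambda>\<omega>. g (X \<omega>))"
  using integrable_distr_eq[of "Xs j" M borel g] integrable_distr_eq[of X M borel g] distr_Xs[OF \<open>j \<ge> 1\<close>]
    \<open>j \<ge> 1\<close> by simp

lemma expectation_Xs_comp:
  fixes g :: "real \<Rightarrow> real"
  assumes "j \<ge> 1" and [measurable]: "g \<in> borel_measurable borel"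
  shows "expectation (\<lambda>\<omega>. g (Xs j \<omega>)) = expectation (\<lambda>\<omega>. g (X \<omega>))"
  using integral_distr[of "Xs j" M borel g] integral_distr[of X M borel g] distr_Xs[OF \<open>j \<ge> 1\<close>]
    \<open>j \<ge> 1\<close> by simp

definition Xs_events :: "nat \<Rightarrow> 'a set set" where
  "Xs_events j = {Xs j -` A \<inter> space M | A. A \<in> sets borel}"

lemma space_past_sigma [simp]: "space (past_sigma M Xs i) = space M"
  unfolding past_sigma_def by (simp add: space_measure_of_conv)

lemma sets_past_sigma: "sets (past_sigma M Xs i) = sigma_sets (space M) (\<Union>j\<in>{1..<i}. Xs_events j)"
  unfolding past_sigma_def Xs_events_def by (subst sets_measure_of) auto

lemma sets_past_sigma_mono: "i \<le> k \<Longrightarrow> sets (past_sigma M Xs i) \<subseteq> sets (past_sigma M Xs k)"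
  unfolding sets_past_sigma
  by (intro sigma_sets_mono') (auto, metis atLeastLessThan_iff order_less_le_trans)

lemma subalgebra_past_sigma: "subalgebra M (past_sigma M Xs i)"
proof -
  have "sigma_sets (space M) (\<Union>j\<in>{1..<i}. Xs_events j) \<subseteq> sets M"
    by (rule sigma_sets_le_sets_iff[THEN iffD2]) (auto simp: Xs_events_def)
  then show ?thesis
    unfolding subalgebra_def sets_past_sigma by simp
qed

lemma measurable_past_sigma_M:
  "f \<in> borel_measurable (past_sigma M Xs i) \<Longrightarrow> f \<in> borel_measurable M"
  by (rule measurable_from_subalg[OF subalgebra_past_sigma])

lemma measurable_past_sigma_mono:
  "i \<le> k \<Longrightarrow> f \<in> borel_measurable (past_sigma M Xs i) \<Longrightarrow> f \<in> borel_measurable (past_sigma M Xs k)"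
  unfolding measurable_def using sets_past_sigma_mono[of i k] by auto

lemma Xs_measurable_past_sigma:
  assumes "1 \<le> j" "j < i"
  shows "Xs j \<in> borel_measurable (past_sigma M Xs i)"
  unfolding measurable_def sets_past_sigma
proof safe
  fix A :: "real set" assume "A \<in> sets borel"
  then have "Xs j -` A \<inter> space M \<in> (\<Union>j\<in>{1..<i}. Xs_events j)"
    using assms unfolding Xs_events_def by (intro UN_I[of j]) auto
  then show "Xs j -` A \<inter> space (past_sigma M Xs i) \<in> sigma_sets (space M) (\<Union>j\<in>{1..<i}. Xs_events j)"
    by auto
qed auto

lemma indep_var_past_sigma_Xs:
  assumes j: "j \<ge> 1" and F: "F \<in> borel_measurable (past_sigma M Xs j)"
  shows "indep_var borel F borel (Xs j)"
proof -
  let ?I = "\<lambda>b. if b then {1..<j} else {j}"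
  have blocks: "indep_sets (\<lambda>b. sigma_sets (space M) (\<Union>i\<in>?I b. Xs_events i)) UNIV"
  proof (rule indep_sets_collect_sigma)
    show "indep_sets Xs_events (\<Union>b. ?I b)"
      by (rule indep_sets_mono_index[where I = "{1..}"])
        (use indep_Xs j in \<open>auto simp: indep_vars_def2 Xs_events_def[abs_def]\<close>)
    show "Int_stable (Xs_events i)" for i
    proof (rule Int_stableI)
      fix a b assume "a \<in> Xs_events i" "b \<in> Xs_events i"
      then obtain A B where "A \<in> sets borel" "B \<in> sets borel"
        "a = Xs i -` A \<inter> space M" "b = Xs i -` B \<inter> space M"
        unfolding Xs_events_def by blast
      then show "a \<inter> b \<in> Xs_events i"
        unfolding Xs_events_def by (intro CollectI exI[of _ "A \<inter> B"]) auto
    qed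
    show "disjoint_family_on ?I UNIV"
      unfolding disjoint_family_on_def by auto
  qed
  have "{F -` A \<inter> space M | A. A \<in> sets borel} \<subseteq> sets (past_sigma M Xs j)"
    using measurable_sets[OF F] by auto
  then have "indep_sets (\<lambda>b. {case_bool F (Xs j) b -` A \<inter> space M | A. A \<in> sets borel}) UNIV"
    by (intro indep_sets_mono_sets[OF blocks])
      (auto split: bool.split simp: sets_past_sigma Xs_events_def)
  moreover have "random_variable borel (case_bool F (Xs j) b)" for b
    using j measurable_past_sigma_M[OF F] by (cases b) auto
  ultimately show ?thesis
    unfolding indep_var_def indep_vars_def2 by (simp add: bool.case_eq_if)
qed

lemma expectation_past_sigma_times_Xs:
  fixes F :: "'a \<Rightarrow> real" and g :: "real \<Rightarrow> real"
  assumes j: "j \<ge> 1" and F: "F \<in> borel_measurable (past_sigma M Xs j)"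
    and F_bound: "\<And>\<omega>. \<omega> \<in> space M \<Longrightarrow> \<bar>F \<omega>\<bar> \<le> B"
    and g [measurable]: "g \<in> borel_measurable borel" and g_bound: "\<And>x. \<bar>g x\<bar> \<le> D"
  shows "expectation (\<lambda>\<omega>. F \<omega> * g (Xs j \<omega>)) = expectation F * expectation (\<lambda>\<omega>. g (X \<omega>))"
proof -
  have FM [measurable]: "F \<in> borel_measurable M"
    using measurable_past_sigma_M[OF F] .
  have "indep_var borel F borel (g \<circ> Xs j)"
    using indep_var_compose[OF indep_var_past_sigma_Xs[OF j F], of "\<lambda>x. x" borel g borel]
    by (simp add: comp_def)
  then have "expectation (\<lambda>\<omega>. F \<omega> * g (Xs j \<omega>)) = expectation F * expectation (\<lambda>\<omega>. g (Xs j \<omega>))"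
    using j by (intro indep_var_lebesgue_integral)
      (auto simp: comp_def intro!: integrable_bounded F_bound g_bound)
  then show ?thesis
    using expectation_Xs_comp[OF j g] by simp
qed

text \<open>The cross term vanishes because \<open>S\<close> and \<open>d\<close> are independent of the centred \<open>g (Xs j)\<close>.\<close>

lemma expectation_square_add_innovation:
  fixes S d :: "'a \<Rightarrow> real" and g :: "real \<Rightarrow> real"
  assumes j: "j \<ge> 1"
    and S: "S \<in> borel_measurable (past_sigma M Xs j)" and S_bound: "\<And>\<omega>. \<omega> \<in> space M \<Longrightarrow> \<bar>S \<omega>\<bar> \<le> B"
    and d: "d \<in> borel_measurable (past_sigma M Xs j)" and d_bound: "\<And>\<omega>. \<omega> \<in> space M \<Longrightarrow> \<bar>d \<omega>\<bar> \<le> C"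
    and g [measurable]: "g \<in> borel_measurable borel" and g_bound: "\<And>x. \<bar>g x\<bar> \<le> D"
    and g_centred: "expectation (\<lambda>\<omega>. g (X \<omega>)) = 0"
  shows "expectation (\<lambda>\<omega>. (S \<omega> + d \<omega> * g (Xs j \<omega>))\<^sup>2)
           = expectation (\<lambda>\<omega>. (S \<omega>)\<^sup>2) + expectation (\<lambda>\<omega>. (d \<omega> * g (Xs j \<omega>))\<^sup>2)"
proof -
  note [measurable] = measurable_past_sigma_M[OF S] measurable_past_sigma_M[OF d] Xs_measurable[OF j]
  have Sd_bound: "\<bar>S \<omega> * d \<omega>\<bar> \<le> B * C" if "\<omega> \<in> space M" for \<omega>
    unfolding abs_mult using S_bound[OF that] d_bound[OF that] by (intro mult_mono) auto
  have SdG_bound: "\<bar>S \<omega> * d \<omega> * g (Xs j \<omega>)\<bar> \<le> B * C * D" if "\<omega> \<in> space M" for \<omega>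
    unfolding abs_mult[of "S \<omega> * d \<omega>"] using Sd_bound[OF that] abs_ge_zero[of "S \<omega> * d \<omega>"] g_bound
    by (intro mult_mono) auto
  have dG_bound: "\<bar>d \<omega> * g (Xs j \<omega>)\<bar> \<le> C * D" if "\<omega> \<in> space M" for \<omega>
    unfolding abs_mult using d_bound[OF that] abs_ge_zero[of "d \<omega>"] g_bound
    by (intro mult_mono) auto
  have "integrable M (\<lambda>\<omega>. (S \<omega>)\<^sup>2)"
    by (rule integrable_bounded[where B = "B\<^sup>2"])
      (use S_bound in \<open>auto simp: abs_le_square_iff[symmetric] intro: order_trans[OF _ abs_ge_self]\<close>)
  moreover have "integrable M (\<lambda>\<omega>. S \<omega> * d \<omega> * g (Xs j \<omega>))"
    by (rule integrable_bounded[where B = "B * C * D"])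
      (use SdG_bound in auto)
  moreover have "integrable M (\<lambda>\<omega>. (d \<omega> * g (Xs j \<omega>))\<^sup>2)"
    by (rule integrable_bounded[where B = "(C * D)\<^sup>2"])
      (use dG_bound in \<open>auto simp: abs_le_square_iff[symmetric]
        intro: order_trans[OF _ abs_ge_self]\<close>)
  moreover have "expectation (\<lambda>\<omega>. S \<omega> * d \<omega> * g (Xs j \<omega>)) = 0"
    using expectation_past_sigma_times_Xs[where F = "\<lambda>\<omega>. S \<omega> * d \<omega>", OF j _ Sd_bound g g_bound]
      S d g_centred by simp
  moreover have "(S \<omega> + d \<omega> * g (Xs j \<omega>))\<^sup>2
      = (S \<omega>)\<^sup>2 + 2 * (S \<omega> * d \<omega> * g (Xs j \<omega>)) + (d \<omega> * g (Xs j \<omega>))\<^sup>2" for \<omega>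
    by (simp add: power2_eq_square algebra_simps)
  ultimately show ?thesis
    by simp
qed

lemma second_moment_predictable_sum_le:
  fixes c :: "nat \<Rightarrow> 'a \<Rightarrow> real" and g :: "real \<Rightarrow> real"
  assumes g [measurable]: "g \<in> borel_measurable borel" and g_bound: "\<And>x. \<bar>g x\<bar> \<le> D"
    and g_centred: "expectation (\<lambda>\<omega>. g (X \<omega>)) = 0"
    and c_past: "\<And>j. 1 \<le> j \<Longrightarrow> j \<le> n \<Longrightarrow> c j \<in> borel_measurable (past_sigma M Xs j)"
    and c_bound: "\<And>j \<omega>. 1 \<le> j \<Longrightarrow> j \<le> n \<Longrightarrow> \<omega> \<in> space M \<Longrightarrow> \<bar>c j \<omega>\<bar> \<le> C"
  shows "expectation (\<lambda>\<omega>. (\<Sum>j=1..n. c j \<omega> * g (Xs j \<omega>))\<^sup>2) \<le> real n * (C * D)\<^sup>2"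
  using c_past c_bound
proof (induction n)
  case (Suc n)
  define S where "S \<omega> = (\<Sum>j=1..n. c j \<omega> * g (Xs j \<omega>))" for \<omega>
  have term_bound: "\<bar>c j \<omega> * g (Xs j \<omega>)\<bar> \<le> C * D" if "1 \<le> j" "j \<le> Suc n" "\<omega> \<in> space M" for j \<omega>
    unfolding abs_mult using Suc.prems(2)[OF that] g_bound by (intro mult_mono) auto
  have "c j \<in> borel_measurable (past_sigma M Xs (Suc n))" if "1 \<le> j" "j \<le> n" for j
    using measurable_past_sigma_mono[OF _ Suc.prems(1)[OF that(1)]] that by simp
  then have S_past: "S \<in> borel_measurable (past_sigma M Xs (Suc n))"
    unfolding S_def
    by (intro borel_measurable_sum borel_measurable_times
        measurable_compose[OF Xs_measurable_past_sigma g]) auto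
  have S_bound: "\<bar>S \<omega>\<bar> \<le> real n * (C * D)" if "\<omega> \<in> space M" for \<omega>
    unfolding S_def by (rule abs_sum_le_mult_bound) (use term_bound that in auto)
  have "expectation (\<lambda>\<omega>. (c (Suc n) \<omega> * g (Xs (Suc n) \<omega>))\<^sup>2) \<le> expectation (\<lambda>\<omega>. (C * D)\<^sup>2)"
    by (rule integral_mono')
      (use term_bound[of "Suc n"] in \<open>auto simp: abs_le_square_iff[symmetric] intro: order_trans[OF _ abs_ge_self]\<close>)
  then have last_term: "expectation (\<lambda>\<omega>. (c (Suc n) \<omega> * g (Xs (Suc n) \<omega>))\<^sup>2) \<le> (C * D)\<^sup>2"
    by (simp add: prob_space)
  have "expectation (\<lambda>\<omega>. (\<Sum>j=1..Suc n. c j \<omega> * g (Xs j \<omega>))\<^sup>2)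
      = expectation (\<lambda>\<omega>. (S \<omega> + c (Suc n) \<omega> * g (Xs (Suc n) \<omega>))\<^sup>2)"
    by (simp add: S_def)
  also have "\<dots> = expectation (\<lambda>\<omega>. (S \<omega>)\<^sup>2) + expectation (\<lambda>\<omega>. (c (Suc n) \<omega> * g (Xs (Suc n) \<omega>))\<^sup>2)"
    using Suc.prems
    by (intro expectation_square_add_innovation[where C = C, OF _ S_past S_bound _ _ g g_bound g_centred]) auto
  also have "\<dots> \<le> real n * (C * D)\<^sup>2 + (C * D)\<^sup>2"
    using Suc.IH Suc.prems last_term unfolding S_def by (intro add_mono) auto
  finally show ?case
    by (simp add: algebra_simps)
qed simp

lemma expectation_abs_weighted_sum_le:
  fixes c :: "nat \<Rightarrow> 'a \<Rightarrow> real" and h :: "real \<Rightarrow> real"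
  assumes h [measurable]: "h \<in> borel_measurable borel" and h_int: "integrable M (\<lambda>\<omega>. h (X \<omega>))"
    and c [measurable]: "\<And>j. 1 \<le> j \<Longrightarrow> j \<le> n \<Longrightarrow> c j \<in> borel_measurable M"
    and c_bound: "\<And>j \<omega>. 1 \<le> j \<Longrightarrow> j \<le> n \<Longrightarrow> \<omega> \<in> space M \<Longrightarrow> \<bar>c j \<omega>\<bar> \<le> C"
  shows "integrable M (\<lambda>\<omega>. \<Sum>j=1..n. c j \<omega> * h (Xs j \<omega>))"
    and "expectation (\<lambda>\<omega>. \<bar>\<Sum>j=1..n. c j \<omega> * h (Xs j \<omega>)\<bar>) \<le> real n * C * expectation (\<lambda>\<omega>. \<bar>h (X \<omega>)\<bar>)"
proof -
  have int_h: "integrable M (\<lambda>\<omega>. \<bar>h (Xs j \<omega>)\<bar>)" if "j \<ge> 1" for j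
    using integrable_Xs_comp_iff[OF that h] h_int by simp
  have int_Ch: "integrable M (\<lambda>\<omega>. \<Sum>j=1..n. C * \<bar>h (Xs j \<omega>)\<bar>)"
    using int_h by auto
  have term_bound: "\<bar>c j \<omega> * h (Xs j \<omega>)\<bar> \<le> C * \<bar>h (Xs j \<omega>)\<bar>"
    if "1 \<le> j" "j \<le> n" "\<omega> \<in> space M" for j \<omega>
    unfolding abs_mult using c_bound[OF that] by (intro mult_right_mono) auto
  have sum_bound: "\<bar>\<Sum>j=1..n. c j \<omega> * h (Xs j \<omega>)\<bar> \<le> (\<Sum>j=1..n. C * \<bar>h (Xs j \<omega>)\<bar>)"
    if "\<omega> \<in> space M" for \<omega>
  proof -
    have "\<bar>\<Sum>j=1..n. c j \<omega> * h (Xs j \<omega>)\<bar> \<le> (\<Sum>j=1..n. \<bar>c j \<omega> * h (Xs j \<omega>)\<bar>)"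
      by (rule sum_abs)
    also have "\<dots> \<le> (\<Sum>j=1..n. C * \<bar>h (Xs j \<omega>)\<bar>)"
      by (rule sum_mono) (use term_bound that in auto)
    finally show ?thesis .
  qed
  show int_sum: "integrable M (\<lambda>\<omega>. \<Sum>j=1..n. c j \<omega> * h (Xs j \<omega>))"
  proof (rule Bochner_Integration.integrable_bound[OF int_Ch])
    show "AE \<omega> in M. norm (\<Sum>j=1..n. c j \<omega> * h (Xs j \<omega>)) \<le> norm (\<Sum>j=1..n. C * \<bar>h (Xs j \<omega>)\<bar>)"
      using sum_bound by (auto intro!: AE_I2 intro: order_trans[OF _ abs_ge_self])
  qed auto
  have "expectation (\<lambda>\<omega>. \<bar>\<Sum>j=1..n. c j \<omega> * h (Xs j \<omega>)\<bar>)
      \<le> expectation (\<lambda>\<omega>. \<Sum>j=1..n. C * \<bar>h (Xs j \<omega>)\<bar>)"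
    by (rule integral_mono) (use int_sum int_Ch sum_bound in auto)
  also have "\<dots> = (\<Sum>j=1..n. C * expectation (\<lambda>\<omega>. \<bar>h (Xs j \<omega>)\<bar>))"
    using int_h by (simp add: Bochner_Integration.integral_sum)
  also have "\<dots> = (\<Sum>j=1..n. C * expectation (\<lambda>\<omega>. \<bar>h (X \<omega>)\<bar>))"
    by (intro sum.cong refl) (simp add: expectation_Xs_comp[of _ "\<lambda>x. \<bar>h x\<bar>"])
  also have "\<dots> = real n * C * expectation (\<lambda>\<omega>. \<bar>h (X \<omega>)\<bar>)"
    by simp
  finally show "expectation (\<lambda>\<omega>. \<bar>\<Sum>j=1..n. c j \<omega> * h (Xs j \<omega>)\<bar>) \<le> real n * C * expectation (\<lambda>\<omega>. \<bar>h (X \<omega>)\<bar>)" .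
qed

end

definition cutoff :: "real \<Rightarrow> real \<Rightarrow> real" where
  "cutoff K x = (if \<bar>x\<bar> \<le> K then x else 0)"

lemma cutoff_measurable [measurable]: "cutoff K \<in> borel_measurable borel"
  unfolding cutoff_def by measurable

lemma abs_cutoff_le: "K \<ge> 0 \<Longrightarrow> \<bar>cutoff K x\<bar> \<le> K"
  unfolding cutoff_def by auto

lemma abs_cutoff_le_abs: "\<bar>cutoff K x\<bar> \<le> \<bar>x\<bar>"
  unfolding cutoff_def by auto

locale centred_iid_sequence = iid_sequence +
  assumes expectation_X: "expectation X = 0"
begin

definition truncated_mean :: "real \<Rightarrow> real" where
  "truncated_mean K = expectation (\<lambda>\<omega>. cutoff K (X \<omega>))"

definition tail_mass :: "real \<Rightarrow> real" where
  "tail_mass K = expectation (\<lambda>\<omega>. \<bar>X \<omega> - cutoff K (X \<omega>)\<bar>)"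

lemma integrable_cutoff_X: "integrable M (\<lambda>\<omega>. cutoff K (X \<omega>))"
  by (rule Bochner_Integration.integrable_bound[where f = "\<lambda>\<omega>. \<bar>X \<omega>\<bar>"])
    (use integrable_X abs_cutoff_le_abs in auto)

lemma abs_truncated_mean_le:
  assumes "K \<ge> 0"
  shows "\<bar>truncated_mean K\<bar> \<le> K"
proof -
  have "\<bar>truncated_mean K\<bar> \<le> expectation (\<lambda>\<omega>. \<bar>cutoff K (X \<omega>)\<bar>)"
    unfolding truncated_mean_def by (rule integral_abs_bound)
  also have "\<dots> \<le> expectation (\<lambda>\<omega>. K)"
    by (rule integral_mono) (use integrable_cutoff_X abs_cutoff_le[OF assms] in auto)
  finally show ?thesis
    by (simp add: prob_space)
qed

text \<open>Since \<open>X\<close> is centred, the mean of its truncation is minus the mean of the discarded tail.\<close>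

lemma abs_truncated_mean_le_tail_mass: "\<bar>truncated_mean K\<bar> \<le> tail_mass K"
proof -
  have "truncated_mean K = - expectation (\<lambda>\<omega>. X \<omega> - cutoff K (X \<omega>))"
    using expectation_X integrable_X integrable_cutoff_X
    by (simp add: truncated_mean_def Bochner_Integration.integral_diff)
  then show ?thesis
    unfolding tail_mass_def using integral_abs_bound by simp
qed

lemma expectation_centred_cutoff:
  "expectation (\<lambda>\<omega>. cutoff K (X \<omega>) - truncated_mean K) = 0"
  using integrable_cutoff_X unfolding truncated_mean_def by (simp add: prob_space)

lemma integrable_centred_remainder:
  "integrable M (\<lambda>\<omega>. X \<omega> - cutoff K (X \<omega>) + truncated_mean K)"
  using integrable_X integrable_cutoff_X by simp

lemma expectation_abs_centred_remainder_le:
  "expectation (\<lambda>\<omega>. \<bar>X \<omega> - cutoff K (X \<omega>) + truncated_mean K\<bar>) \<le> 2 * tail_mass K"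
proof -
  have "expectation (\<lambda>\<omega>. \<bar>X \<omega> - cutoff K (X \<omega>) + truncated_mean K\<bar>)
      \<le> expectation (\<lambda>\<omega>. \<bar>X \<omega> - cutoff K (X \<omega>)\<bar> + \<bar>truncated_mean K\<bar>)"
    by (rule integral_mono) (use integrable_centred_remainder integrable_X integrable_cutoff_X in auto)
  also have "\<dots> = tail_mass K + \<bar>truncated_mean K\<bar>"
    using integrable_X integrable_cutoff_X by (simp add: tail_mass_def prob_space)
  finally show ?thesis
    using abs_truncated_mean_le_tail_mass[of K] by simp
qed

lemma tail_mass_tendsto_0: "(\<lambda>n::nat. tail_mass (real n)) \<longlonglongrightarrow> 0"
proof -
  have "(\<lambda>n::nat. expectation (\<lambda>\<omega>. \<bar>X \<omega> - cutoff (real n) (X \<omega>)\<bar>)) \<longlonglongrightarrow> expectation (\<lambda>\<omega>. 0)"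
  proof (rule integral_dominated_convergence[where w = "\<lambda>\<omega>. \<bar>X \<omega>\<bar>"])
    show "AE \<omega> in M. (\<lambda>n. \<bar>X \<omega> - cutoff (real n) (X \<omega>)\<bar>) \<longlonglongrightarrow> 0"
    proof (rule AE_I2)
      fix \<omega>
      obtain N :: nat where "\<bar>X \<omega>\<bar> \<le> real N"
        using real_arch_simple by blast
      then have "\<forall>n\<ge>N. \<bar>X \<omega> - cutoff (real n) (X \<omega>)\<bar> = 0"
        unfolding cutoff_def by auto
      then show "(\<lambda>n. \<bar>X \<omega> - cutoff (real n) (X \<omega>)\<bar>) \<longlonglongrightarrow> 0"
        by (intro tendsto_eventually) (auto simp: eventually_sequentially)
    qed
  qed (use integrable_X in \<open>auto simp: cutoff_def\<close>)
  then show ?thesis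
    unfolding tail_mass_def by simp
qed

lemma prob_weighted_average_gt_le:
  fixes c :: "nat \<Rightarrow> 'a \<Rightarrow> real"
  assumes K: "K \<ge> 0" and C: "C \<ge> 0" and \<epsilon>: "\<epsilon> > 0" and t: "t \<ge> 1"
    and c_past: "\<And>j. 1 \<le> j \<Longrightarrow> j \<le> t \<Longrightarrow> c j \<in> borel_measurable (past_sigma M Xs j)"
    and c_bound: "\<And>j \<omega>. 1 \<le> j \<Longrightarrow> j \<le> t \<Longrightarrow> \<omega> \<in> space M \<Longrightarrow> \<bar>c j \<omega>\<bar> \<le> C"
  shows "prob {\<omega> \<in> space M. \<bar>(1 / real t) * (\<Sum>j=1..t. c j \<omega> * Xs j \<omega>)\<bar> > \<epsilon>}
           \<le> 4 * C * tail_mass K / \<epsilon> + 16 * C\<^sup>2 * K\<^sup>2 / (real t * \<epsilon>\<^sup>2)"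
proof -
  define g where "g x = cutoff K x - truncated_mean K" for x
  define h where "h x = x - cutoff K x + truncated_mean K" for x
  define U where "U \<omega> = (\<Sum>j=1..t. c j \<omega> * g (Xs j \<omega>))" for \<omega>
  define V where "V \<omega> = (\<Sum>j=1..t. c j \<omega> * h (Xs j \<omega>))" for \<omega>
  define a where "a = real t * \<epsilon> / 2"
  have a: "a > 0"
    using t \<epsilon> unfolding a_def by simp
  have [measurable]: "g \<in> borel_measurable borel" "h \<in> borel_measurable borel"
    unfolding g_def h_def by measurable
  have c_M [measurable]: "c j \<in> borel_measurable M" if "1 \<le> j" "j \<le> t" for j
    using measurable_past_sigma_M[OF c_past[OF that]] .
  have U_M [measurable]: "U \<in> borel_measurable M" and V_M [measurable]: "V \<in> borel_measurable M"
    unfolding U_def V_def by (auto intro!: borel_measurable_sum)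
  have g_bound: "\<bar>g x\<bar> \<le> 2 * K" for x
    using abs_cutoff_le[OF K, of x] abs_truncated_mean_le[OF K] unfolding g_def by linarith
  have g_centred: "expectation (\<lambda>\<omega>. g (X \<omega>)) = 0"
    unfolding g_def by (rule expectation_centred_cutoff)
  have h_int: "integrable M (\<lambda>\<omega>. h (X \<omega>))"
    unfolding h_def by (rule integrable_centred_remainder)
  have h_abs: "expectation (\<lambda>\<omega>. \<bar>h (X \<omega>)\<bar>) \<le> 2 * tail_mass K"
    unfolding h_def by (rule expectation_abs_centred_remainder_le)
  have U2: "expectation (\<lambda>\<omega>. (U \<omega>)\<^sup>2) \<le> real t * (C * (2 * K))\<^sup>2"
    unfolding U_def by (rule second_moment_predictable_sum_le[OF _ g_bound g_centred c_past c_bound]) auto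
  have U2_int: "integrable M (\<lambda>\<omega>. (U \<omega>)\<^sup>2)"
  proof (rule integrable_bounded[where B = "(real t * (C * (2 * K)))\<^sup>2"])
    fix \<omega> assume "\<omega> \<in> space M"
    then have "\<bar>U \<omega>\<bar> \<le> real t * (C * (2 * K))"
      unfolding U_def using c_bound g_bound C K
      by (intro abs_sum_le_mult_bound) (auto simp: abs_mult intro!: mult_mono)
    then show "\<bar>(U \<omega>)\<^sup>2\<bar> \<le> (real t * (C * (2 * K)))\<^sup>2"
      by (simp add: abs_le_square_iff[symmetric])
  qed simp
  note V_bounds = expectation_abs_weighted_sum_le[where n = t and c = c, OF _ h_int c_M c_bound,
      folded V_def]
  have V_int: "integrable M V"
    using V_bounds(1) by simp
  have "expectation (\<lambda>\<omega>. \<bar>V \<omega>\<bar>) \<le> real t * C * expectation (\<lambda>\<omega>. \<bar>h (X \<omega>)\<bar>)"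
    using V_bounds(2) by simp
  also have "\<dots> \<le> real t * C * (2 * tail_mass K)"
    using h_abs C by (intro mult_left_mono) auto
  finally have V1: "expectation (\<lambda>\<omega>. \<bar>V \<omega>\<bar>) \<le> real t * C * (2 * tail_mass K)" .
  have "\<bar>(1 / real t) * (\<Sum>j=1..t. c j \<omega> * Xs j \<omega>)\<bar> > \<epsilon> \<longleftrightarrow> \<bar>U \<omega> + V \<omega>\<bar> > 2 * a" for \<omega>
  proof -
    have "(\<Sum>j=1..t. c j \<omega> * Xs j \<omega>) = U \<omega> + V \<omega>"
      unfolding U_def V_def g_def h_def by (simp add: sum.distrib[symmetric] algebra_simps)
    then show ?thesis
      using t unfolding a_def by (simp add: abs_mult field_simps)
  qed
  then have "prob {\<omega> \<in> space M. \<bar>(1 / real t) * (\<Sum>j=1..t. c j \<omega> * Xs j \<omega>)\<bar> > \<epsilon>}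
      \<le> expectation (\<lambda>\<omega>. (U \<omega>)\<^sup>2) / a\<^sup>2 + expectation (\<lambda>\<omega>. \<bar>V \<omega>\<bar>) / a"
    using prob_abs_add_gt_le[OF a U_M V_M U2_int V_int] by simp
  also have "\<dots> \<le> real t * (C * (2 * K))\<^sup>2 / a\<^sup>2 + real t * C * (2 * tail_mass K) / a"
    using U2 V1 a by (intro add_mono divide_right_mono) auto
  also have "\<dots> = 4 * C * tail_mass K / \<epsilon> + 16 * C\<^sup>2 * K\<^sup>2 / (real t * \<epsilon>\<^sup>2)"
    unfolding a_def using t \<epsilon> by (simp add: field_simps power2_eq_square)
  finally show ?thesis .
qed

lemma weighted_average_tendsto_0:
  fixes c :: "nat \<Rightarrow> nat \<Rightarrow> 'a \<Rightarrow> real"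
  assumes C: "C > 0" and \<epsilon>: "\<epsilon> > 0"
    and c_past: "\<And>t j. 1 \<le> j \<Longrightarrow> j \<le> t \<Longrightarrow> c t j \<in> borel_measurable (past_sigma M Xs j)"
    and c_bound: "\<And>t j \<omega>. 1 \<le> j \<Longrightarrow> j \<le> t \<Longrightarrow> \<omega> \<in> space M \<Longrightarrow> \<bar>c t j \<omega>\<bar> \<le> C"
  shows "(\<lambda>t. prob {\<omega> \<in> space M. \<bar>(1 / real t) * (\<Sum>j=1..t. c t j \<omega> * Xs j \<omega>)\<bar> > \<epsilon>}) \<longlonglongrightarrow> 0"
proof (rule order_tendstoI)
  show "\<forall>\<^sub>F t in sequentially.
      r < prob {\<omega> \<in> space M. \<bar>(1 / real t) * (\<Sum>j=1..t. c t j \<omega> * Xs j \<omega>)\<bar> > \<epsilon>}"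
    if "r < 0" for r
    using that by (intro always_eventually allI) (rule order_less_le_trans[OF _ measure_nonneg])
next
  fix r :: real assume r: "r > 0"
  have "\<forall>\<^sub>F n in sequentially. tail_mass (real n) < r * \<epsilon> / (8 * C)"
    using order_tendstoD(2)[OF tail_mass_tendsto_0] r \<epsilon> C by simp
  then obtain N :: nat where N: "tail_mass (real N) < r * \<epsilon> / (8 * C)"
    by (auto simp: eventually_sequentially)
  define K where "K = real N"
  have truncation_small: "4 * C * tail_mass K / \<epsilon> < r / 2"
    using N C \<epsilon> unfolding K_def by (simp add: field_simps)
  have second_moment_term: "(\<lambda>t. 16 * C\<^sup>2 * K\<^sup>2 / (real t * \<epsilon>\<^sup>2)) \<longlonglongrightarrow> 0"
    using lim_const_over_n[of "16 * C\<^sup>2 * K\<^sup>2 / \<epsilon>\<^sup>2"] by (simp add: divide_divide_eq_left mult.commute)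
  have "\<forall>\<^sub>F t in sequentially. 16 * C\<^sup>2 * K\<^sup>2 / (real t * \<epsilon>\<^sup>2) < r / 2"
    using order_tendstoD(2)[OF second_moment_term, of "r / 2"] r by simp
  moreover have "\<forall>\<^sub>F t in sequentially. t \<ge> 1"
    by (rule eventually_ge_at_top)
  ultimately show "\<forall>\<^sub>F t in sequentially.
      prob {\<omega> \<in> space M. \<bar>(1 / real t) * (\<Sum>j=1..t. c t j \<omega> * Xs j \<omega>)\<bar> > \<epsilon>} < r"
  proof eventually_elim
    case (elim t)
    have "prob {\<omega> \<in> space M. \<bar>(1 / real t) * (\<Sum>j=1..t. c t j \<omega> * Xs j \<omega>)\<bar> > \<epsilon>}
        \<le> 4 * C * tail_mass K / \<epsilon> + 16 * C\<^sup>2 * K\<^sup>2 / (real t * \<epsilon>\<^sup>2)"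
      using C \<epsilon> elim(2) c_past c_bound unfolding K_def
      by (intro prob_weighted_average_gt_le) auto
    then show ?case
      using truncation_small elim(1) by linarith
  qed
qed

end

theorem lemma4:
  fixes M :: "'a measure" and X :: "'a \<Rightarrow> real" and Xs :: "nat \<Rightarrow> 'a \<Rightarrow> real"
    and a lam :: "nat \<Rightarrow> 'a \<Rightarrow> real" and R0 :: real and \<epsilon> :: real
  assumes "prob_space M"
    and "integrable M X" and "prob_space.expectation M X = 0"
    and "prob_space.indep_vars M (\<lambda>_. borel) Xs {1..}"
    and "\<And>j. j \<ge> 1 \<Longrightarrow> distr M borel (Xs j) = distr M borel X"
    and "R0 > 0"
    and "\<And>i. i \<ge> 1 \<Longrightarrow> a i \<in> borel_measurable (past_sigma M Xs i)"
    and "\<And>i. i \<ge> 1 \<Longrightarrow> lam i \<in> borel_measurable (past_sigma M Xs i)"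
    and "\<And>i \<omega>. i \<ge> 1 \<Longrightarrow> \<omega> \<in> space M \<Longrightarrow> a i \<omega> \<in> {-R0..R0}"
    and "\<And>i \<omega>. i \<ge> 1 \<Longrightarrow> \<omega> \<in> space M \<Longrightarrow> lam i \<omega> \<in> {-1, 1}"
    and "\<epsilon> > 0"
  shows "((\<lambda>t::nat. measure M {\<omega> \<in> space M.
             \<bar>(1 / real t) * (\<Sum>j=1..t. lam j \<omega> * Xs j \<omega>)\<bar> > \<epsilon>}) \<longlongrightarrow> 0) sequentially
       \<and> ((\<lambda>t::nat. measure M {\<omega> \<in> space M.
             \<bar>(1 / (real t)\<^sup>2) * (\<Sum>i=1..t. a i \<omega> * (\<Sum>j=i..t. lam j \<omega> * Xs j \<omega>))\<bar> > \<epsilon>})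
           \<longlongrightarrow> 0) sequentially"
proof -
  interpret centred_iid_sequence M X Xs
    by (rule centred_iid_sequence.intro[OF iid_sequence.intro[OF assms(1)]], unfold_locales)
      (use assms in auto)
  have lam_bound: "\<bar>lam i \<omega>\<bar> = 1" if "i \<ge> 1" "\<omega> \<in> space M" for i \<omega>
    using assms(10)[OF that] by auto
  have a_bound: "\<bar>a i \<omega>\<bar> \<le> R0" if "i \<ge> 1" "\<omega> \<in> space M" for i \<omega>
    using assms(9)[OF that] by auto
  define c where "c t j \<omega> = lam j \<omega> * (\<Sum>i=1..j. a i \<omega>) / real t" for t j \<omega>
  have c_past: "c t j \<in> borel_measurable (past_sigma M Xs j)" if "1 \<le> j" "j \<le> t" for t j
    unfolding c_def using that
    by (intro borel_measurable_divide borel_measurable_times borel_measurable_sum assms(8)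
        measurable_past_sigma_mono[OF _ assms(7)] borel_measurable_const) auto
  have c_bound: "\<bar>c t j \<omega>\<bar> \<le> R0" if "1 \<le> j" "j \<le> t" "\<omega> \<in> space M" for t j \<omega>
  proof -
    have "\<bar>\<Sum>i=1..j. a i \<omega>\<bar> \<le> real j * R0"
      by (rule abs_sum_le_mult_bound) (use a_bound that in auto)
    also have "\<dots> \<le> real t * R0"
      using that assms(6) by (intro mult_right_mono) auto
    finally have "\<bar>\<Sum>i=1..j. a i \<omega>\<bar> / real t \<le> R0"
      using that by (simp add: field_simps)
    then show ?thesis
      unfolding c_def using lam_bound[of j \<omega>] that by (simp add: abs_mult abs_divide)
  qed
  have Z_eq: "(1 / (real t)\<^sup>2) * (\<Sum>i=1..t. a i \<omega> * (\<Sum>j=i..t. lam j \<omega> * Xs j \<omega>))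
      = (1 / real t) * (\<Sum>j=1..t. c t j \<omega> * Xs j \<omega>)" for t \<omega>
  proof -
    have "(\<Sum>j=1..t. c t j \<omega> * Xs j \<omega>) = (\<Sum>j=1..t. lam j \<omega> * Xs j \<omega> * (\<Sum>i=1..j. a i \<omega>)) / real t"
      unfolding c_def sum_divide_distrib by (intro sum.cong) (auto simp: algebra_simps)
    then show ?thesis
      unfolding sum_times_tail_sum_swap by (simp add: power2_eq_square)
  qed
  have "(\<lambda>t. prob {\<omega> \<in> space M. \<bar>(1 / real t) * (\<Sum>j=1..t. lam j \<omega> * Xs j \<omega>)\<bar> > \<epsilon>}) \<longlonglongrightarrow> 0"
    by (rule weighted_average_tendsto_0[where c = "\<lambda>t j. lam j" and C = 1])
      (use assms(8,11) lam_bound in auto)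
  moreover have "(\<lambda>t. prob {\<omega> \<in> space M.
      \<bar>(1 / (real t)\<^sup>2) * (\<Sum>i=1..t. a i \<omega> * (\<Sum>j=i..t. lam j \<omega> * Xs j \<omega>))\<bar> > \<epsilon>}) \<longlonglongrightarrow> 0"
    unfolding Z_eq by (rule weighted_average_tendsto_0[OF assms(6,11) c_past c_bound])
  ultimately show ?thesis ..
qed

end
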